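(* Let $\beta,\gamma,\mu>0$, $0<p<1$, and $\delta=\beta/(\gamma+\mu)$. Consider the temporary adoption model $$S_0'=\mu-\beta S_0A-\mu S_0,\quad S_1'=(1-p)\beta S_0A-\beta S_1A-\mu S_1,\quad A'=\beta(pS_0+S_1)A-(\gamma+\mu)A,\quad R'=\gamma A-\mu R$$ on $\{S_0,S_1,A,R\ge0,\ S_0+S_1+A+R=1\}$. Its equilibria are the contagion-free equilibrium $E_0=(S_0,S_1,A,R)=(1,0,0,0)$ and points with $A\in\{A_1,A_2\}$, where $$A_{1,2}=\tfrac12\Big(1+\tfrac{\gamma}{\mu}\Big)^{-1}\Big[1-2\delta^{-1}\pm\sqrt{1-4(1-p)\delta^{-1}}\Big],$$ and $$S_0=\frac{1}{\delta(\frac{\gamma}{\mu}+1)A+1},\qquad S_1=(1-p)\frac{\delta(\frac{\gamma}{\mu}+1)A}{(\delta(\frac{\gamma}{\mu}+1)A+1)^2},\qquad R=\frac{\gamma}{\mu}A.$$ Call $E_i$ ($i=1,2$) the equilibrium with $A=A_i$ when $A_i$ is real and positive (an endemic equilibrium). Then: (I) If $p<\tfrac12$: for $\delta<4(1-p)$ there are no endemic equilibria; for $4(1-p)\le\delta<\tfrac1p$ there are two endemic equilibria $E_1,E_2$, which coincide when $\delta=4(1-p)$; for $\delta\ge\tfrac1p$ there is a unique endemic equilibrium $E_1$. (II) If $p\ge\tfrac12$: for $\delta\le\tfrac1p$ there is no endemic equilibrium; for $\delta>\tfrac1p$ there is a unique endemic equilibrium $E_1$.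
   Context: $S_0,S_1,A,R$ are the fractions of naive, informed, adopter and removed (former adopter, who never re-adopts) individuals; $\beta$ is the effective contact rate, $\mu$ the per capita demographic turnover rate, $\gamma$ the per capita rate of abandoning adoption, $p$ the probability of adoption on first effective contact with an adopter. $\delta=\beta/(\gamma+\mu)$ is the contact parameter. An endemic equilibrium is an equilibrium with $A>0$ and all components non-negative. *)

theory Defs
  imports Complex_Main
begin

type_synonym state = "real \<times> real \<times> real \<times> real"  (* (S0, S1, A, R) *)

definition ta_field :: "real \<Rightarrow> real \<Rightarrow> real \<Rightarrow> real \<Rightarrow> state \<Rightarrow> state" where
  "ta_field \<beta> \<gamma> \<mu> p = (\<lambda>(S0, S1, A, R).
     (\<mu> - \<beta> * S0 * A - \<mu> * S0,
      (1 - p) * \<beta> * S0 * A - \<beta> * S1 * A - \<mu> * S1,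
      \<beta> * (p * S0 + S1) * A - (\<gamma> + \<mu>) * A,
      \<gamma> * A - \<mu> * R))"

definition ta_domain :: "state set" where
  "ta_domain = {(S0, S1, A, R). S0 \<ge> 0 \<and> S1 \<ge> 0 \<and> A \<ge> 0 \<and> R \<ge> 0 \<and> S0 + S1 + A + R = 1}"

definition ta_equilibria :: "real \<Rightarrow> real \<Rightarrow> real \<Rightarrow> real \<Rightarrow> state set" where
  "ta_equilibria \<beta> \<gamma> \<mu> p = {x \<in> ta_domain. ta_field \<beta> \<gamma> \<mu> p x = (0, 0, 0, 0)}"

definition endemic_equilibria :: "real \<Rightarrow> real \<Rightarrow> real \<Rightarrow> real \<Rightarrow> state set" where
  "endemic_equilibria \<beta> \<gamma> \<mu> p = {(S0, S1, A, R) \<in> ta_equilibria \<beta> \<gamma> \<mu> p. A > 0}"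

definition contact_param :: "real \<Rightarrow> real \<Rightarrow> real \<Rightarrow> real" where
  "contact_param \<beta> \<gamma> \<mu> = \<beta> / (\<gamma> + \<mu>)"

definition A_1 :: "real \<Rightarrow> real \<Rightarrow> real \<Rightarrow> real \<Rightarrow> real" where
  "A_1 \<beta> \<gamma> \<mu> p = (let \<delta> = contact_param \<beta> \<gamma> \<mu> in
     (1/2) * inverse (1 + \<gamma>/\<mu>) * (1 - 2/\<delta> + sqrt (1 - 4*(1-p)/\<delta>)))"

definition A_2 :: "real \<Rightarrow> real \<Rightarrow> real \<Rightarrow> real \<Rightarrow> real" where
  "A_2 \<beta> \<gamma> \<mu> p = (let \<delta> = contact_param \<beta> \<gamma> \<mu> in
     (1/2) * inverse (1 + \<gamma>/\<mu>) * (1 - 2/\<delta> - sqrt (1 - 4*(1-p)/\<delta>)))"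

definition eq_point :: "real \<Rightarrow> real \<Rightarrow> real \<Rightarrow> real \<Rightarrow> real \<Rightarrow> state" where
  "eq_point \<beta> \<gamma> \<mu> p A = (let \<delta> = contact_param \<beta> \<gamma> \<mu>; k = \<delta> * (\<gamma>/\<mu> + 1) * A in
     (1 / (k + 1), (1 - p) * k / (k + 1)^2, A, (\<gamma>/\<mu>) * A))"

end

theory Submission
  imports Defs "HOL-Library.Quadratic_Discriminant"
begin

text \<open>Put \<open>x = 1 + \<beta>A/\<mu>\<close>. The equations for \<open>S\<^sub>0\<close>, \<open>S\<^sub>1\<close> and \<open>R\<close> at an equilibrium
force the paper's formulas for every \<open>A \<ge> 0\<close>, and for \<open>A > 0\<close> the remaining equation (equivalently,
\<open>S\<^sub>0 + S\<^sub>1 + A + R = 1\<close>) becomes \<open>x\<^sup>2 - \<delta>x + \<delta>(1 - p) = 0\<close>, whose roots are the values of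
\<open>x\<close> at \<open>A\<^sub>1\<close> and \<open>A\<^sub>2\<close>. Endemic equilibria are therefore the real roots \<open>x > 1\<close>. The quadratic
takes the value \<open>1 - \<delta>p\<close> at \<open>x = 1\<close> and has its vertex at \<open>\<delta>/2\<close>: if \<open>\<delta>p > 1\<close> only the larger
root exceeds 1, while if \<open>\<delta>p < 1\<close> both or neither do according as \<open>\<delta> > 2\<close> or not. Finally
\<open>\<delta>p \<ge> 1\<close> already forces the discriminant condition \<open>\<delta> \<ge> 4(1 - p)\<close>, since \<open>4p(1 - p) \<le> 1\<close>.\<close>

definition equilibrium_quadratic :: "real \<Rightarrow> real \<Rightarrow> real \<Rightarrow> real" where
  "equilibrium_quadratic \<delta> p x = x\<^sup>2 - \<delta> * x + \<delta> * (1 - p)"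

definition upper_root :: "real \<Rightarrow> real \<Rightarrow> real" where
  "upper_root \<delta> p = \<delta> * (1 + sqrt (1 - 4 * (1 - p) / \<delta>)) / 2"

definition lower_root :: "real \<Rightarrow> real \<Rightarrow> real" where
  "lower_root \<delta> p = \<delta> * (1 - sqrt (1 - 4 * (1 - p) / \<delta>)) / 2"

lemma discrim_equilibrium_quadratic:
  assumes "\<delta> > 0"
  shows "discrim 1 (- \<delta>) (\<delta> * (1 - p)) = \<delta>\<^sup>2 * (1 - 4 * (1 - p) / \<delta>)"
  using assms by (simp add: discrim_def field_simps power2_eq_square)

lemma equilibrium_quadratic_eq_0_iff:
  assumes "\<delta> > 0"
  shows "equilibrium_quadratic \<delta> p x = 0 \<longleftrightarrow>
    4 * (1 - p) \<le> \<delta> \<and> (x = upper_root \<delta> p \<or> x = lower_root \<delta> p)"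
proof -
  have q: "equilibrium_quadratic \<delta> p x = 1 * x\<^sup>2 + (- \<delta>) * x + \<delta> * (1 - p)"
    by (simp add: equilibrium_quadratic_def)
  have D: "4 * (1 - p) \<le> \<delta> \<longleftrightarrow> 0 \<le> 1 - 4 * (1 - p) / \<delta>"
    using assms by (simp add: divide_le_eq)
  show ?thesis
  proof (cases "4 * (1 - p) \<le> \<delta>")
    case False
    then have "discrim 1 (- \<delta>) (\<delta> * (1 - p)) < 0"
      using assms D by (simp add: discrim_equilibrium_quadratic mult_pos_neg)
    then show ?thesis
      using discriminant_negative[of 1 "- \<delta>" "\<delta> * (1 - p)" x] False q by simp
  next
    case True
    then have "0 \<le> discrim 1 (- \<delta>) (\<delta> * (1 - p))"
      using assms D by (simp add: discrim_equilibrium_quadratic)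
    then have "equilibrium_quadratic \<delta> p x = 0 \<longleftrightarrow>
        x = (\<delta> + sqrt (discrim 1 (- \<delta>) (\<delta> * (1 - p)))) / 2 \<or>
        x = (\<delta> - sqrt (discrim 1 (- \<delta>) (\<delta> * (1 - p)))) / 2"
      using discriminant_nonneg[of 1 "- \<delta>" "\<delta> * (1 - p)" x] unfolding q by simp
    moreover have "sqrt (discrim 1 (- \<delta>) (\<delta> * (1 - p))) = \<delta> * sqrt (1 - 4 * (1 - p) / \<delta>)"
      using assms by (simp add: discrim_equilibrium_quadratic real_sqrt_mult)
    ultimately show ?thesis
      using True by (simp add: upper_root_def lower_root_def algebra_simps)
  qed
qed

lemma upper_root_gt_1_iff:
  assumes "\<delta> > 0" "4 * (1 - p) \<le> \<delta>"
  shows "1 < upper_root \<delta> p \<longleftrightarrow> 1 < \<delta> * p \<or> 2 < \<delta>"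
proof -
  define t where "t = \<delta> * sqrt (1 - 4 * (1 - p) / \<delta>)"
  have "0 \<le> t" using assms by (simp add: t_def divide_le_eq)
  have t2: "t\<^sup>2 = (2 - \<delta>)\<^sup>2 + 4 * (\<delta> * p - 1)"
    using assms by (simp add: t_def power_mult_distrib divide_le_eq field_simps power2_eq_square)
  have "1 < upper_root \<delta> p \<longleftrightarrow> 2 - \<delta> < t"
    by (simp add: upper_root_def t_def algebra_simps)
  also have "\<dots> \<longleftrightarrow> 1 < \<delta> * p \<or> 2 < \<delta>"
  proof (cases "2 < \<delta>")
    case False
    then have "2 - \<delta> < t \<longleftrightarrow> (2 - \<delta>)\<^sup>2 < t\<^sup>2"
      using \<open>0 \<le> t\<close> by (smt (verit) power2_less_imp_less power_strict_mono zero_less_numeral)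
    then show ?thesis using False t2 by auto
  qed (use \<open>0 \<le> t\<close> in auto)
  finally show ?thesis .
qed

lemma lower_root_gt_1_iff:
  assumes "\<delta> > 0" "4 * (1 - p) \<le> \<delta>"
  shows "1 < lower_root \<delta> p \<longleftrightarrow> \<delta> * p < 1 \<and> 2 < \<delta>"
proof -
  define t where "t = \<delta> * sqrt (1 - 4 * (1 - p) / \<delta>)"
  have "0 \<le> t" using assms by (simp add: t_def divide_le_eq)
  have t2: "t\<^sup>2 = (\<delta> - 2)\<^sup>2 + 4 * (\<delta> * p - 1)"
    using assms by (simp add: t_def power_mult_distrib divide_le_eq field_simps power2_eq_square)
  have "1 < lower_root \<delta> p \<longleftrightarrow> t < \<delta> - 2"
    by (simp add: lower_root_def t_def algebra_simps)
  also have "\<dots> \<longleftrightarrow> \<delta> * p < 1 \<and> 2 < \<delta>"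
  proof (cases "2 < \<delta>")
    case True
    then have "t < \<delta> - 2 \<longleftrightarrow> t\<^sup>2 < (\<delta> - 2)\<^sup>2"
      using \<open>0 \<le> t\<close> by (smt (verit) power2_less_imp_less power_strict_mono zero_less_numeral)
    then show ?thesis using True t2 by auto
  qed (use \<open>0 \<le> t\<close> in auto)
  finally show ?thesis .
qed

lemma four_mult_one_minus_le:
  fixes \<delta> p :: real
  assumes "\<delta> > 0" "1 \<le> \<delta> * p"
  shows "4 * (1 - p) \<le> \<delta>"
proof (cases "p \<le> 1")
  case True
  have "4 * (1 - p) \<le> 4 * (1 - p) * (\<delta> * p)"
    using True assms(2) by (simp add: mult_le_cancel_left1)
  also have "\<dots> = \<delta> - \<delta> * (2 * p - 1)\<^sup>2"
    by (simp add: power2_eq_square algebra_simps)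
  also have "\<dots> \<le> \<delta>" using assms(1) by simp
  finally show ?thesis .
qed (use assms in simp)

lemma contact_param_pos: "\<beta> > 0 \<Longrightarrow> \<gamma> > 0 \<Longrightarrow> \<mu> > 0 \<Longrightarrow> contact_param \<beta> \<gamma> \<mu> > 0"
  by (simp add: contact_param_def)

lemma eq_point_eq:
  assumes "\<beta> > 0" "\<gamma> > 0" "\<mu> > 0" "x = \<beta> * A / \<mu> + 1"
  shows "eq_point \<beta> \<gamma> \<mu> p A = (1 / x, (1 - p) * (x - 1) / x\<^sup>2, A, \<gamma> / \<mu> * A)"
proof -
  have "\<gamma> / \<mu> + 1 = (\<gamma> + \<mu>) / \<mu>" using assms by (simp add: field_simps)
  then have "contact_param \<beta> \<gamma> \<mu> * (\<gamma> / \<mu> + 1) = \<beta> / \<mu>"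
    using assms by (simp add: contact_param_def)
  then show ?thesis using assms(4) by (simp add: eq_point_def Let_def)
qed

lemma ta_field_eq_point:
  assumes "\<beta> > 0" "\<gamma> > 0" "\<mu> > 0" "A \<ge> 0"
  defines "x \<equiv> \<beta> * A / \<mu> + 1"
  shows "ta_field \<beta> \<gamma> \<mu> p (eq_point \<beta> \<gamma> \<mu> p A) =
    (0, 0, - (\<gamma> + \<mu>) * A * equilibrium_quadratic (contact_param \<beta> \<gamma> \<mu>) p x / x\<^sup>2, 0)"
proof -
  have x: "x = \<beta> * A / \<mu> + 1" by (simp add: x_def)
  have "x > 0" using assms by (simp add: x_def add_nonneg_pos)
  have A: "A = \<mu> * (x - 1) / \<beta>" using assms by (simp add: x_def)
  have \<beta>: "\<beta> = contact_param \<beta> \<gamma> \<mu> * (\<gamma> + \<mu>)"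
    using assms by (simp add: contact_param_def)
  have "\<mu> - \<beta> * (1 / x) * A - \<mu> * (1 / x) = 0"
    using \<open>x > 0\<close> assms(1-4) by (subst A) (simp add: field_simps)
  moreover have "(1 - p) * \<beta> * (1 / x) * A - \<beta> * ((1 - p) * (x - 1) / x\<^sup>2) * A
      - \<mu> * ((1 - p) * (x - 1) / x\<^sup>2) = 0"
    using \<open>x > 0\<close> assms(1-4) by (subst A)+ (simp add: field_simps power2_eq_square)
  moreover have "\<beta> * (p * (1 / x) + (1 - p) * (x - 1) / x\<^sup>2) * A - (\<gamma> + \<mu>) * A
      = - (\<gamma> + \<mu>) * A * equilibrium_quadratic (contact_param \<beta> \<gamma> \<mu>) p x / x\<^sup>2"
    using \<open>x > 0\<close> by (subst \<beta>) (simp add: equilibrium_quadratic_def field_simps power2_eq_square)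
  ultimately show ?thesis
    using assms by (simp add: ta_field_def eq_point_eq[OF assms(1-3) x])
qed

lemma eq_point_in_ta_domain_iff:
  assumes "\<beta> > 0" "\<gamma> > 0" "\<mu> > 0" "p \<le> 1" "A \<ge> 0"
  shows "eq_point \<beta> \<gamma> \<mu> p A \<in> ta_domain \<longleftrightarrow>
    A = 0 \<or> equilibrium_quadratic (contact_param \<beta> \<gamma> \<mu>) p (\<beta> * A / \<mu> + 1) = 0"
proof -
  define x where "x = \<beta> * A / \<mu> + 1"
  define \<delta> where "\<delta> = contact_param \<beta> \<gamma> \<mu>"
  have "x > 0" using assms by (simp add: x_def add_nonneg_pos)
  have "\<delta> > 0" using assms by (simp add: \<delta>_def contact_param_pos)
  have "A + \<gamma> / \<mu> * A = (x - 1) / \<delta>"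
    using assms by (simp add: x_def \<delta>_def contact_param_def field_simps)
  moreover have "1 / x + (1 - p) * (x - 1) / x\<^sup>2 + (x - 1) / \<delta> =
      1 + (x - 1) * equilibrium_quadratic \<delta> p x / (\<delta> * x\<^sup>2)"
    using \<open>x > 0\<close> \<open>\<delta> > 0\<close>
    by (simp add: equilibrium_quadratic_def field_simps power2_eq_square)
  ultimately have sum: "1 / x + (1 - p) * (x - 1) / x\<^sup>2 + A + \<gamma> / \<mu> * A =
      1 + (x - 1) * equilibrium_quadratic \<delta> p x / (\<delta> * x\<^sup>2)"
    by (simp add: add.assoc)
  have "x - 1 = 0 \<longleftrightarrow> A = 0" using assms by (simp add: x_def)
  moreover have "0 \<le> (1 - p) * (x - 1) / x\<^sup>2" using assms by (simp add: x_def)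
  ultimately show ?thesis
    using assms \<open>x > 0\<close> \<open>\<delta> > 0\<close> sum
    by (simp add: eq_point_eq[OF assms(1-3) x_def] ta_domain_def x_def[symmetric] \<delta>_def[symmetric])
qed

lemma ta_field_eq_0_imp_eq_point:
  assumes "\<beta> > 0" "\<gamma> > 0" "\<mu> > 0" "A \<ge> 0"
    and "ta_field \<beta> \<gamma> \<mu> p (S0, S1, A, R) = (0, 0, 0, 0)"
  shows "(S0, S1, A, R) = eq_point \<beta> \<gamma> \<mu> p A"
proof -
  define x where "x = \<beta> * A / \<mu> + 1"
  have "x > 0" using assms by (simp add: x_def add_nonneg_pos)
  from assms(5) have S0: "\<mu> - \<beta> * S0 * A - \<mu> * S0 = 0"
    and S1: "(1 - p) * \<beta> * S0 * A - \<beta> * S1 * A - \<mu> * S1 = 0" and R: "\<gamma> * A - \<mu> * R = 0"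
    by (simp_all add: ta_field_def)
  have "\<mu> - \<beta> * S0 * A - \<mu> * S0 = \<mu> * (1 - x * S0)"
    using assms by (simp add: x_def field_simps)
  then have "\<mu> * (1 - x * S0) = 0" using S0 by simp
  then have "S0 = 1 / x" using assms \<open>x > 0\<close> by (simp add: field_simps)
  moreover have "(1 - p) * \<beta> * S0 * A - \<beta> * S1 * A - \<mu> * S1 = \<mu> * ((1 - p) * (x - 1) * S0 - x * S1)"
    using assms by (simp add: x_def field_simps)
  then have "\<mu> * ((1 - p) * (x - 1) * S0 - x * S1) = 0" using S1 by simp
  then have "(1 - p) * (x - 1) * S0 = x * S1" using assms by simp
  then have "S1 = (1 - p) * (x - 1) * S0 / x" using \<open>x > 0\<close> by (simp add: field_simps)
  moreover have "R = \<gamma> / \<mu> * A" using R assms by (simp add: field_simps)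
  ultimately show ?thesis
    by (simp add: eq_point_eq[OF assms(1-3) x_def] power2_eq_square)
qed

lemma ta_equilibria_eq:
  assumes "\<beta> > 0" "\<gamma> > 0" "\<mu> > 0" "p \<le> 1"
  shows "ta_equilibria \<beta> \<gamma> \<mu> p = eq_point \<beta> \<gamma> \<mu> p `
    {A. A = 0 \<or> 0 < A \<and> equilibrium_quadratic (contact_param \<beta> \<gamma> \<mu>) p (\<beta> * A / \<mu> + 1) = 0}"
    (is "_ = eq_point \<beta> \<gamma> \<mu> p ` ?roots")
proof (intro set_eqI iffI)
  fix z assume "z \<in> ta_equilibria \<beta> \<gamma> \<mu> p"
  then obtain S0 S1 A R where z: "z = (S0, S1, A, R)" "A \<ge> 0" "z \<in> ta_domain"
      and "ta_field \<beta> \<gamma> \<mu> p (S0, S1, A, R) = (0, 0, 0, 0)"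
    by (cases z) (auto simp: ta_equilibria_def ta_domain_def)
  then have "z = eq_point \<beta> \<gamma> \<mu> p A"
    using assms ta_field_eq_0_imp_eq_point by blast
  moreover have "A \<in> ?roots"
    using z calculation eq_point_in_ta_domain_iff[OF assms] by force
  ultimately show "z \<in> eq_point \<beta> \<gamma> \<mu> p ` ?roots" by blast
next
  fix z assume "z \<in> eq_point \<beta> \<gamma> \<mu> p ` ?roots"
  then obtain A where "A \<in> ?roots" "z = eq_point \<beta> \<gamma> \<mu> p A" by blast
  then show "z \<in> ta_equilibria \<beta> \<gamma> \<mu> p"
    using assms eq_point_in_ta_domain_iff[OF assms] ta_field_eq_point
    by (auto simp: ta_equilibria_def)
qed

lemma adopters_eq_point [simp]: "fst (snd (snd (eq_point \<beta> \<gamma> \<mu> p A))) = A"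
  by (simp add: eq_point_def Let_def)

lemma eq_point_inject: "eq_point \<beta> \<gamma> \<mu> p A = eq_point \<beta> \<gamma> \<mu> p A' \<longleftrightarrow> A = A'"
  by (metis adopters_eq_point)

lemma endemic_equilibria_eq_image:
  assumes "\<beta> > 0" "\<gamma> > 0" "\<mu> > 0" "p \<le> 1"
  shows "endemic_equilibria \<beta> \<gamma> \<mu> p = eq_point \<beta> \<gamma> \<mu> p `
    {A. 0 < A \<and> equilibrium_quadratic (contact_param \<beta> \<gamma> \<mu>) p (\<beta> * A / \<mu> + 1) = 0}"
proof -
  have "endemic_equilibria \<beta> \<gamma> \<mu> p = {z \<in> ta_equilibria \<beta> \<gamma> \<mu> p. 0 < fst (snd (snd z))}"
    by (auto simp: endemic_equilibria_def)
  then show ?thesis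
    unfolding ta_equilibria_eq[OF assms] by auto
qed

lemma ta_equilibria_eq_insert:
  assumes "\<beta> > 0" "\<gamma> > 0" "\<mu> > 0" "p \<le> 1"
  shows "ta_equilibria \<beta> \<gamma> \<mu> p = insert (1, 0, 0, 0) (endemic_equilibria \<beta> \<gamma> \<mu> p)"
proof -
  have "eq_point \<beta> \<gamma> \<mu> p 0 = (1, 0, 0, 0)" by (simp add: eq_point_def)
  moreover have "{A. A = 0 \<or> 0 < A \<and> equilibrium_quadratic (contact_param \<beta> \<gamma> \<mu>) p (\<beta> * A / \<mu> + 1) = 0}
      = insert 0 {A. 0 < A \<and> equilibrium_quadratic (contact_param \<beta> \<gamma> \<mu>) p (\<beta> * A / \<mu> + 1) = 0}"
    by auto
  ultimately show ?thesis
    unfolding ta_equilibria_eq[OF assms] endemic_equilibria_eq_image[OF assms] by simp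
qed

lemma inverse_one_plus_ratio_eq:
  assumes "\<beta> > 0" "\<gamma> > 0" "\<mu> > 0"
  shows "inverse (1 + \<gamma> / \<mu>) = contact_param \<beta> \<gamma> \<mu> * \<mu> / \<beta>"
proof -
  have "inverse (1 + \<gamma> / \<mu>) = \<mu> / (\<gamma> + \<mu>)" using assms by (simp add: field_simps)
  also have "\<dots> = contact_param \<beta> \<gamma> \<mu> * \<mu> / \<beta>" using assms by (simp add: contact_param_def)
  finally show ?thesis .
qed

lemma scaled_A_1_eq_upper_root:
  assumes "\<beta> > 0" "\<gamma> > 0" "\<mu> > 0"
  shows "\<beta> * A_1 \<beta> \<gamma> \<mu> p / \<mu> + 1 = upper_root (contact_param \<beta> \<gamma> \<mu>) p"
  unfolding A_1_def Let_def inverse_one_plus_ratio_eq[OF assms]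
  using assms contact_param_pos[OF assms] by (simp add: upper_root_def field_simps)

lemma scaled_A_2_eq_lower_root:
  assumes "\<beta> > 0" "\<gamma> > 0" "\<mu> > 0"
  shows "\<beta> * A_2 \<beta> \<gamma> \<mu> p / \<mu> + 1 = lower_root (contact_param \<beta> \<gamma> \<mu>) p"
  unfolding A_2_def Let_def inverse_one_plus_ratio_eq[OF assms]
  using assms contact_param_pos[OF assms] by (simp add: lower_root_def field_simps)

lemma scaled_inject:
  fixes \<beta> \<mu> A A' :: real
  assumes "\<beta> > 0" "\<mu> > 0"
  shows "\<beta> * A / \<mu> + 1 = \<beta> * A' / \<mu> + 1 \<longleftrightarrow> A = A'"
  using assms by (simp add: divide_cancel_right)

lemma endemic_equilibria_eq:
  assumes "\<beta> > 0" "\<gamma> > 0" "\<mu> > 0" "p \<le> 1"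
  shows "endemic_equilibria \<beta> \<gamma> \<mu> p = eq_point \<beta> \<gamma> \<mu> p `
    ({A_1 \<beta> \<gamma> \<mu> p, A_2 \<beta> \<gamma> \<mu> p} \<inter> {A. 0 < A \<and> 4 * (1 - p) \<le> contact_param \<beta> \<gamma> \<mu>})"
proof -
  have "equilibrium_quadratic (contact_param \<beta> \<gamma> \<mu>) p (\<beta> * A / \<mu> + 1) = 0 \<longleftrightarrow>
      4 * (1 - p) \<le> contact_param \<beta> \<gamma> \<mu> \<and> (A = A_1 \<beta> \<gamma> \<mu> p \<or> A = A_2 \<beta> \<gamma> \<mu> p)" for A
  proof -
    have "\<beta> * A / \<mu> + 1 = upper_root (contact_param \<beta> \<gamma> \<mu>) p \<longleftrightarrow> A = A_1 \<beta> \<gamma> \<mu> p"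
      "\<beta> * A / \<mu> + 1 = lower_root (contact_param \<beta> \<gamma> \<mu>) p \<longleftrightarrow> A = A_2 \<beta> \<gamma> \<mu> p"
      unfolding scaled_A_1_eq_upper_root[OF assms(1-3), symmetric]
        scaled_A_2_eq_lower_root[OF assms(1-3), symmetric]
      by (rule scaled_inject[OF assms(1,3)])+
    then show ?thesis
      using equilibrium_quadratic_eq_0_iff[OF contact_param_pos[OF assms(1-3)]] by simp
  qed
  then show ?thesis
    unfolding endemic_equilibria_eq_image[OF assms] by (intro arg_cong[where f = "image _"]) auto
qed

lemma positive_iff_scaled_gt_1:
  fixes \<beta> \<mu> A :: real
  assumes "\<beta> > 0" "\<mu> > 0"
  shows "0 < A \<longleftrightarrow> 1 < \<beta> * A / \<mu> + 1"
  using assms by (simp add: zero_less_divide_iff zero_less_mult_iff)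

lemma A_1_pos_iff:
  assumes "\<beta> > 0" "\<gamma> > 0" "\<mu> > 0" "4 * (1 - p) \<le> contact_param \<beta> \<gamma> \<mu>"
  shows "0 < A_1 \<beta> \<gamma> \<mu> p \<longleftrightarrow> 1 < contact_param \<beta> \<gamma> \<mu> * p \<or> 2 < contact_param \<beta> \<gamma> \<mu>"
proof -
  have "0 < A_1 \<beta> \<gamma> \<mu> p \<longleftrightarrow> 1 < upper_root (contact_param \<beta> \<gamma> \<mu>) p"
    unfolding scaled_A_1_eq_upper_root[OF assms(1-3), symmetric]
    by (rule positive_iff_scaled_gt_1[OF assms(1,3)])
  then show ?thesis
    using upper_root_gt_1_iff[OF contact_param_pos[OF assms(1-3)] assms(4)] by simp
qed

lemma A_2_pos_iff:
  assumes "\<beta> > 0" "\<gamma> > 0" "\<mu> > 0" "4 * (1 - p) \<le> contact_param \<beta> \<gamma> \<mu>"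
  shows "0 < A_2 \<beta> \<gamma> \<mu> p \<longleftrightarrow> contact_param \<beta> \<gamma> \<mu> * p < 1 \<and> 2 < contact_param \<beta> \<gamma> \<mu>"
proof -
  have "0 < A_2 \<beta> \<gamma> \<mu> p \<longleftrightarrow> 1 < lower_root (contact_param \<beta> \<gamma> \<mu>) p"
    unfolding scaled_A_2_eq_lower_root[OF assms(1-3), symmetric]
    by (rule positive_iff_scaled_gt_1[OF assms(1,3)])
  then show ?thesis
    using lower_root_gt_1_iff[OF contact_param_pos[OF assms(1-3)] assms(4)] by simp
qed

lemma A_1_eq_A_2_iff:
  assumes "\<beta> > 0" "\<gamma> > 0" "\<mu> > 0"
  shows "A_1 \<beta> \<gamma> \<mu> p = A_2 \<beta> \<gamma> \<mu> p \<longleftrightarrow> contact_param \<beta> \<gamma> \<mu> = 4 * (1 - p)"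
proof -
  have "A_1 \<beta> \<gamma> \<mu> p = A_2 \<beta> \<gamma> \<mu> p \<longleftrightarrow>
      upper_root (contact_param \<beta> \<gamma> \<mu>) p = lower_root (contact_param \<beta> \<gamma> \<mu>) p"
    unfolding scaled_A_1_eq_upper_root[OF assms, symmetric] scaled_A_2_eq_lower_root[OF assms, symmetric]
    by (rule scaled_inject[OF assms(1,3), symmetric])
  also have "\<dots> \<longleftrightarrow> contact_param \<beta> \<gamma> \<mu> = 4 * (1 - p)"
    using contact_param_pos[OF assms] by (auto simp: upper_root_def lower_root_def)
  finally show ?thesis .
qed

theorem mainTheorem4:
  fixes \<beta> \<gamma> \<mu> p :: real
  assumes "\<beta> > 0" "\<gamma> > 0" "\<mu> > 0" "0 < p" "p < 1"
  defines "\<delta> \<equiv> contact_param \<beta> \<gamma> \<mu>"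
  defines "E1 \<equiv> eq_point \<beta> \<gamma> \<mu> p (A_1 \<beta> \<gamma> \<mu> p)"
      and "E2 \<equiv> eq_point \<beta> \<gamma> \<mu> p (A_2 \<beta> \<gamma> \<mu> p)"
  shows
    "(ta_equilibria \<beta> \<gamma> \<mu> p =
       {(1, 0, 0, 0)} \<union> ({E1, E2} \<inter> ta_equilibria \<beta> \<gamma> \<mu> p)) \<and>
    (p < 1/2 \<longrightarrow>
       (\<delta> < 4*(1-p) \<longrightarrow> endemic_equilibria \<beta> \<gamma> \<mu> p = {}) \<and>
       (4*(1-p) \<le> \<delta> \<and> \<delta> < 1/p \<longrightarrow>
          A_1 \<beta> \<gamma> \<mu> p > 0 \<and> A_2 \<beta> \<gamma> \<mu> p > 0 \<and>
          endemic_equilibria \<beta> \<gamma> \<mu> p = {E1, E2} \<and>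
          (\<delta> = 4*(1-p) \<longrightarrow> E1 = E2) \<and> (\<delta> > 4*(1-p) \<longrightarrow> E1 \<noteq> E2)) \<and>
       (\<delta> \<ge> 1/p \<longrightarrow> A_1 \<beta> \<gamma> \<mu> p > 0 \<and> endemic_equilibria \<beta> \<gamma> \<mu> p = {E1})) \<and>
    (p \<ge> 1/2 \<longrightarrow>
       (\<delta> \<le> 1/p \<longrightarrow> endemic_equilibria \<beta> \<gamma> \<mu> p = {}) \<and>
       (\<delta> > 1/p \<longrightarrow> A_1 \<beta> \<gamma> \<mu> p > 0 \<and> endemic_equilibria \<beta> \<gamma> \<mu> p = {E1}))"
proof -
  note pos = assms(1-3)
  have "\<delta> > 0" using pos by (simp add: \<delta>_def contact_param_pos)
  have endemic: "endemic_equilibria \<beta> \<gamma> \<mu> p = eq_point \<beta> \<gamma> \<mu> p `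
      ({A_1 \<beta> \<gamma> \<mu> p, A_2 \<beta> \<gamma> \<mu> p} \<inter> {A. 0 < A \<and> 4 * (1 - p) \<le> \<delta>})"
    using endemic_equilibria_eq[OF pos] assms(5) by (simp add: \<delta>_def)
  have A1: "0 < A_1 \<beta> \<gamma> \<mu> p \<longleftrightarrow> 1 < \<delta> * p \<or> 2 < \<delta>" if "4 * (1 - p) \<le> \<delta>"
    using A_1_pos_iff[OF pos] that by (simp add: \<delta>_def)
  have A2: "0 < A_2 \<beta> \<gamma> \<mu> p \<longleftrightarrow> \<delta> * p < 1 \<and> 2 < \<delta>" if "4 * (1 - p) \<le> \<delta>"
    using A_2_pos_iff[OF pos] that by (simp add: \<delta>_def)
  have E12: "E1 = E2 \<longleftrightarrow> \<delta> = 4 * (1 - p)"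
    using A_1_eq_A_2_iff[OF pos] by (simp add: E1_def E2_def eq_point_inject \<delta>_def)
  have threshold: "4 * (1 - p) \<le> \<delta>" if "1 \<le> \<delta> * p"
    using four_mult_one_minus_le[OF \<open>\<delta> > 0\<close> that] .
  have recip: "\<delta> < 1 / p \<longleftrightarrow> \<delta> * p < 1" "\<delta> \<le> 1 / p \<longleftrightarrow> \<delta> * p \<le> 1"
    using assms(4) by (simp_all add: less_divide_eq le_divide_eq)
  have half: "p < 1 / 2 \<longleftrightarrow> \<delta> * p < \<delta> / 2"
    using \<open>\<delta> > 0\<close> by (simp add: field_simps)
  show ?thesis
  proof (intro conjI impI)
    show "ta_equilibria \<beta> \<gamma> \<mu> p = {(1, 0, 0, 0)} \<union> ({E1, E2} \<inter> ta_equilibria \<beta> \<gamma> \<mu> p)"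
      using ta_equilibria_eq_insert[OF pos] assms(5) endemic by (auto simp: E1_def E2_def)
  qed (use endemic A1 A2 E12 threshold recip half in \<open>auto simp: E1_def E2_def\<close>)
qed

end
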